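(* Let $\mathcal C$ be a clustering problem (with $|\mathcal X|\ge2$), let $t\in\mathbb N$, and let $N_1,\dots,N_K\ge1$ be integers with $\sum_iN_i=t$. For each $i\in[K]$ let $\tilde x_i=(\tilde x_{i,1},\dots,\tilde x_{i,N_i})\in\mathcal X^{N_i}$, let $\hat P_i$ be its empirical distribution, $\hat P=(\hat P_1,\dots,\hat P_K)$, and $w=(N_1/t,\dots,N_K/t)$. For $\sigma\in\mathcal C$ let $L_\sigma=\sup_{Q\in\Lambda_\sigma}\prod_{i=1}^K\prod_{n=1}^{N_i}Q_i(\tilde x_{i,n})$, and for $\sigma_1,\sigma_2\in\mathcal C$ let $Z_{\sigma_1,\sigma_2}=\log\frac{L_{\sigma_1}}{L_{\sigma_2}}$. Let $\hat\sigma\in\arg\min_{\sigma\in\mathcal C}g_{\hat P}^\sigma(w)$. Then each $L_\sigma\in(0,\infty)$ and $$\max_{\sigma\in\mathcal C}\min_{\sigma'\in\mathcal C\setminus\{\sigma\}}Z_{\sigma,\sigma'}=t\,G_{\hat P}^{\hat\sigma}(w)-t\,g_{\hat P}^{\hat\sigma}(w),$$ and the maximum on the left-hand side is attained at $\sigma=\hat\sigma$.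
   Context: Framework. Let $\mathcal X$ be a finite alphabet with $|\mathcal X|\ge2$, $\mathcal P(\mathcal X)$ the set of probability distributions on $\mathcal X$, and $K\ge2$ an integer (number of arms); $[n]=\{1,\dots,n\}$. A hypothesis is a collection $\sigma=\{\mathcal A_1^\sigma,\dots,\mathcal A_{M_\sigma}^\sigma\}$ ($M_\sigma\ge1$) of pairwise disjoint subsets of $[K]$, each of cardinality at least 2 (clusters); let $\mathcal A^\sigma_{M_\sigma+1}=[K]\setminus\bigcup_{m\le M_\sigma}\mathcal A_m^\sigma$ (unconstrained group, possibly empty). $\Lambda_\sigma$ is the set of $P\in\mathcal P(\mathcal X)^K$ with $P_i=P_j$ whenever $i,j\in\mathcal A_m^\sigma$ for some $m\le M_\sigma$, and $P_i\neq P_j$ whenever $i\in\mathcal A_{m_1}^\sigma$, $j\in\mathcal A_{m_2}^\sigma$ with $m_1\ne m_2\in[M_\sigma+1]$. A clustering problem is a finite set $\mathcal C$ of hypotheses with $|\mathcal C|\ge2$. Functions. $D(P\|Q)$ is the KL divergence. For $\mathcal A\subseteq[K]$, $G(P_{\mathcal A},w_{\mathcal A})=0$ if $w_i=0$ for all $i\in\mathcal A$, and otherwise $G(P_{\mathcal A},w_{\mathcal A})=\sum_{i\in\mathcal A}w_iD(P_i\|W)$ with $W=\sum_{i\in\mathcal A}w_iP_i/\sum_{i\in\mathcal A}w_i$. For $\sigma\in\mathcal C$, $g_P^\sigma(w)=\sum_{m=1}^{M_\sigma}G(P_{\mathcal A_m^\sigma},w_{\mathcal A_m^\sigma})$ and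 $G_P^\sigma(w)=\min_{\sigma'\in\mathcal C\setminus\{\sigma\}}g_P^{\sigma'}(w)$. The empirical distribution of $x^n$ is $\hat P_{x^n}(a)=\frac1n\sum_{k=1}^n1\{x_k=a\}$. *)

theory Defs
  imports Complex_Main "HOL-Library.Extended_Real" "HOL-Library.Cardinality"
begin

definition is_dist :: "('x::finite \<Rightarrow> real) \<Rightarrow> bool" where
  "is_dist p \<longleftrightarrow> (\<forall>a. 0 \<le> p a) \<and> (\<Sum>a\<in>UNIV. p a) = 1"

text \<open>KL divergence with the convention 0 log 0 = 0 (only used where P is abs. continuous w.r.t. Q).\<close>
definition KL :: "('x::finite \<Rightarrow> real) \<Rightarrow> ('x \<Rightarrow> real) \<Rightarrow> real" where
  "KL p q = (\<Sum>a\<in>UNIV. if p a = 0 then 0 else p a * ln (p a / q a))"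

definition Gdiv :: "(nat \<Rightarrow> 'x::finite \<Rightarrow> real) \<Rightarrow> (nat \<Rightarrow> real) \<Rightarrow> nat set \<Rightarrow> real" where
  "Gdiv P w A =
     (if \<forall>i\<in>A. w i = 0 then 0
      else (let W = (\<lambda>a. (\<Sum>i\<in>A. w i * P i a) / (\<Sum>i\<in>A. w i))
            in \<Sum>i\<in>A. w i * KL (P i) W))"

definition g_hyp :: "(nat \<Rightarrow> 'x::finite \<Rightarrow> real) \<Rightarrow> (nat \<Rightarrow> real) \<Rightarrow> nat set set \<Rightarrow> real" where
  "g_hyp P w \<sigma> = (\<Sum>A\<in>\<sigma>. Gdiv P w A)"

definition G_hyp :: "nat set set set \<Rightarrow> (nat \<Rightarrow> 'x::finite \<Rightarrow> real) \<Rightarrow> (nat \<Rightarrow> real) \<Rightarrow> nat set set \<Rightarrow> real" where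
  "G_hyp C P w \<sigma> = Min ((\<lambda>\<sigma>'. g_hyp P w \<sigma>') ` (C - {\<sigma>}))"

definition is_hypothesis :: "nat \<Rightarrow> nat set set \<Rightarrow> bool" where
  "is_hypothesis K \<sigma> \<longleftrightarrow> \<sigma> \<noteq> {} \<and> (\<forall>A\<in>\<sigma>. A \<subseteq> {1..K} \<and> card A \<ge> 2)
     \<and> (\<forall>A\<in>\<sigma>. \<forall>B\<in>\<sigma>. A \<noteq> B \<longrightarrow> A \<inter> B = {})"

text \<open>Clusters together with the unconstrained group (possibly empty).\<close>
definition groups :: "nat \<Rightarrow> nat set set \<Rightarrow> nat set set" where
  "groups K \<sigma> = insert ({1..K} - \<Union>\<sigma>) \<sigma>"

definition Lambda :: "nat \<Rightarrow> nat set set \<Rightarrow> (nat \<Rightarrow> 'x::finite \<Rightarrow> real) set" where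
  "Lambda K \<sigma> = {P. (\<forall>i\<in>{1..K}. is_dist (P i))
       \<and> (\<forall>A\<in>\<sigma>. \<forall>i\<in>A. \<forall>j\<in>A. P i = P j)
       \<and> (\<forall>A\<in>groups K \<sigma>. \<forall>B\<in>groups K \<sigma>. A \<noteq> B \<longrightarrow> (\<forall>i\<in>A. \<forall>j\<in>B. P i \<noteq> P j))}"

definition clustering_problem :: "nat \<Rightarrow> nat set set set \<Rightarrow> bool" where
  "clustering_problem K C \<longleftrightarrow> finite C \<and> card C \<ge> 2 \<and> (\<forall>\<sigma>\<in>C. is_hypothesis K \<sigma>)"

definition emp_dist :: "'x list \<Rightarrow> 'x \<Rightarrow> real" where
  "emp_dist xs a = (1 / real (length xs)) * (\<Sum>k<length xs. if xs ! k = a then 1 else 0)"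

definition likelihood :: "nat \<Rightarrow> (nat \<Rightarrow> 'x::finite list) \<Rightarrow> nat set set \<Rightarrow> ereal" where
  "likelihood K xt \<sigma> =
     (SUP Q\<in>(Lambda K \<sigma> :: (nat \<Rightarrow> 'x \<Rightarrow> real) set).
        ereal (\<Prod>i\<in>{1..K}. \<Prod>n<length (xt i). Q i (xt i ! n)))"

end

theory Submission
  imports Defs
begin

text \<open>For a fixed hypothesis, Gibbs' inequality applied block by block shows that the
  likelihood over the closure of \<open>Lambda K \<sigma>\<close> is maximised by pooling the samples of each
  cluster into one empirical distribution; the separation constraints only prevent the
  supremum from being attained. Pooling a cluster \<open>A\<close> costs exactly \<open>t * Gdiv P w A\<close> in
  log-likelihood, so \<open>ln L\<^sub>\<sigma>\<close> is the unconstrained log-likelihood minus \<open>t * g\<^sub>\<sigma>\<close>. Hence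
  \<open>Z \<sigma> \<sigma>' = t * (g\<^sub>\<sigma>' - g\<^sub>\<sigma>)\<close>, and the max-min is attained at the minimiser of \<open>g\<close>.\<close>

lemma emp_dist_eq_count_list: "emp_dist xs a = real (count_list xs a) / real (length xs)"
proof -
  have "(\<Sum>k<length xs. if xs ! k = a then 1 else 0 :: real) = real (count_list xs a)"
  proof (induction xs)
    case (Cons x xs)
    then show ?case by (simp only: length_Cons sum.lessThan_Suc_shift nth_Cons_0 nth_Cons_Suc) simp
  qed simp
  then show ?thesis unfolding emp_dist_def by simp
qed

lemma prod_nth_eq_prod_count_list:
  fixes f :: "'x::finite \<Rightarrow> 'b::comm_monoid_mult"
  shows "(\<Prod>n<length xs. f (xs ! n)) = (\<Prod>a\<in>UNIV. f a ^ count_list xs a)"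
proof (induction xs)
  case (Cons x xs)
  have "(\<Prod>a\<in>UNIV. f a ^ count_list (x # xs) a)
      = (\<Prod>a\<in>UNIV. f a ^ count_list xs a * (if x = a then f a else 1))"
    by (rule prod.cong) (auto simp: power_Suc2 simp del: power_Suc)
  also have "\<dots> = f x * (\<Prod>a\<in>UNIV. f a ^ count_list xs a)"
    by (simp add: prod.distrib prod.delta mult.commute)
  finally show ?case
    using Cons by (simp only: length_Cons prod.lessThan_Suc_shift nth_Cons_0 nth_Cons_Suc)
qed simp

lemma sum_count_list_UNIV: "(\<Sum>a\<in>(UNIV :: 'x::finite set). count_list xs a) = length xs"
  by (rule sum_count_set) auto

lemma is_dist_mix:
  assumes "is_dist p" "is_dist q" "0 \<le> \<epsilon>" "\<epsilon> \<le> 1"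
  shows "is_dist (\<lambda>a. (1 - \<epsilon>) * p a + \<epsilon> * q a)"
  using assms by (auto simp: is_dist_def sum.distrib sum_distrib_left[symmetric])

lemma eventually_mix_ne_0:
  fixes x y :: real
  assumes "x \<noteq> 0 \<or> y \<noteq> 0"
  shows "\<forall>\<^sub>F \<epsilon> in at_right 0. (1 - \<epsilon>) * x + \<epsilon> * y \<noteq> 0"
proof (cases "x = 0")
  case True
  then show ?thesis
    using assms eventually_at_right_less[of 0] by (auto elim: eventually_mono)
next
  case False
  have "((\<lambda>\<epsilon>. (1 - \<epsilon>) * x + \<epsilon> * y) \<longlongrightarrow> (1 - 0) * x + 0 * y) (at_right 0)"
    by (intro tendsto_intros)
  then show ?thesis using False tendsto_imp_eventually_ne by auto
qed

lemma exists_two_elements: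
  assumes "2 \<le> CARD('x)"
  obtains a0 a1 :: "'x::finite" where "a0 \<noteq> a1"
proof -
  have "\<not> CARD('x) \<le> Suc 0" using assms by simp
  then show thesis using that card_le_Suc0_iff_eq[of "UNIV :: 'x set"] by auto
qed

lemma KL_self: "KL p p = 0"
  unfolding KL_def by (rule sum.neutral) simp

lemma Gdiv_singleton: "Gdiv P w {i} = 0"
  by (simp add: Gdiv_def KL_self)

lemma prod_power_le_prod_frequency_power:
  fixes m :: "'x::finite \<Rightarrow> nat" and q :: "'x \<Rightarrow> real"
  assumes q: "is_dist q" and M: "M = real (\<Sum>a\<in>UNIV. m a)" "0 < M"
  shows "(\<Prod>a\<in>UNIV. q a ^ m a) \<le> (\<Prod>a\<in>UNIV. (m a / M) ^ m a)"
proof (cases "\<exists>a. 0 < m a \<and> q a = 0")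
  case True
  then have "(\<Prod>a\<in>UNIV. q a ^ m a) = 0"
    by (auto intro: prod_zero)
  moreover have "0 \<le> (\<Prod>a\<in>UNIV. (m a / M) ^ m a)"
    using M by (intro prod_nonneg) auto
  ultimately show ?thesis by linarith
next
  case False
  define S where "S = {a. 0 < m a}"
  have q_pos: "0 < q a" if "a \<in> S" for a
    using False q that unfolding S_def is_dist_def by (metis less_eq_real_def mem_Collect_eq)
  have f_pos: "0 < m a / M" if "a \<in> S" for a
    using that M(2) unfolding S_def by simp
  have on_S: "(\<Prod>a\<in>UNIV. f a ^ m a) = (\<Prod>a\<in>S. f a ^ m a)" for f :: "'x \<Rightarrow> real"
    by (rule prod.mono_neutral_right) (simp_all add: S_def)
  have ln_prod_eq: "ln (\<Prod>a\<in>S. f a ^ m a) = (\<Sum>a\<in>S. m a * ln (f a))"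
    if "\<And>a. a \<in> S \<Longrightarrow> 0 < f a" for f :: "'x \<Rightarrow> real"
    using that by (subst ln_prod) (auto simp: ln_realpow dest!: that)
  have "(\<Sum>a\<in>S. m a * ln (q a)) - (\<Sum>a\<in>S. m a * ln (m a / M)) = (\<Sum>a\<in>S. m a * ln (q a / (m a / M)))"
    unfolding sum_subtractf[symmetric]
  proof (rule sum.cong)
    fix a assume "a \<in> S"
    then show "m a * ln (q a) - m a * ln (m a / M) = m a * ln (q a / (m a / M))"
      using q_pos[of a] f_pos[of a] M(2) ln_div[of "q a" "m a / M"] by (simp add: right_diff_distrib)
  qed simp
  also have "\<dots> \<le> (\<Sum>a\<in>S. m a * (q a / (m a / M) - 1))"
    using q_pos f_pos M(2) by (intro sum_mono mult_left_mono ln_le_minus_one divide_pos_pos) (auto simp: S_def)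
  also have "\<dots> = (\<Sum>a\<in>S. M * q a - m a)"
    by (rule sum.cong) (auto simp: S_def field_simps)
  also have "\<dots> = M * (\<Sum>a\<in>S. q a) - (\<Sum>a\<in>S. real (m a))"
    by (simp add: sum_subtractf sum_distrib_left)
  also have "\<dots> \<le> 0"
  proof -
    have "(\<Sum>a\<in>S. real (m a)) = M"
      unfolding M(1) of_nat_sum by (rule sum.mono_neutral_left) (auto simp: S_def)
    moreover have "(\<Sum>a\<in>S. q a) \<le> 1"
      using q sum_mono2[of UNIV S q] by (simp add: is_dist_def)
    ultimately show ?thesis using M(2) by (simp add: mult_left_le)
  qed
  finally have "ln (\<Prod>a\<in>S. q a ^ m a) \<le> ln (\<Prod>a\<in>S. (m a / M) ^ m a)"
    using q_pos f_pos by (simp add: ln_prod_eq)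
  then show ?thesis
    using q_pos f_pos by (simp add: on_S prod_pos)
qed

context comm_monoid_set begin

lemma partition_blocks:
  assumes "finite I" and "\<And>i. i \<in> I \<Longrightarrow> i \<in> b i \<and> b i \<subseteq> I"
    and "\<And>i j. i \<in> I \<Longrightarrow> j \<in> b i \<Longrightarrow> b j = b i"
  shows "F g I = F (\<lambda>B. F g B) (b ` I)"
proof -
  have "I = \<Union>(b ` I)" using assms(2) by blast
  moreover have "finite B" if "B \<in> b ` I" for B
    using that assms(1,2) finite_subset by blast
  moreover have "B \<inter> B' = {}" if blocks: "B \<in> b ` I" "B' \<in> b ` I" and "B \<noteq> B'" for B B'
  proof -
    obtain i i' where "i \<in> I" "i' \<in> I" "B = b i" "B' = b i'" using blocks by blast
    then show ?thesis using \<open>B \<noteq> B'\<close> assms(3) by blast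
  qed
  ultimately show ?thesis
    using UNION_disjoint[of "b ` I" "\<lambda>B. B" g] assms(1) by simp
qed

end

lemma is_dist_Lambda: "P \<in> Lambda K \<sigma> \<Longrightarrow> i \<in> {1..K} \<Longrightarrow> is_dist (P i)"
  by (simp add: Lambda_def)

text \<open>Unconstrained arms form singleton blocks, so that they can be treated like clusters;
  the blocks of a hypothesis partition \<open>{1..K}\<close>.\<close>

definition block :: "nat set set \<Rightarrow> nat \<Rightarrow> nat set" where
  "block \<sigma> i = (if i \<in> \<Union>\<sigma> then THE A. A \<in> \<sigma> \<and> i \<in> A else {i})"

locale clustering_hypothesis =
  fixes K :: nat and \<sigma> :: "nat set set"
  assumes hyp: "is_hypothesis K \<sigma>"
begin

lemma block_eq_cluster:
  assumes "A \<in> \<sigma>" "i \<in> A"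
  shows "block \<sigma> i = A"
proof -
  have "(THE A. A \<in> \<sigma> \<and> i \<in> A) = A"
    using assms hyp unfolding is_hypothesis_def by (intro the_equality) blast+
  then show ?thesis using assms by (auto simp: block_def)
qed

lemma block_unconstrained: "i \<notin> \<Union>\<sigma> \<Longrightarrow> block \<sigma> i = {i}"
  by (simp add: block_def)

lemma mem_block: "i \<in> block \<sigma> i"
  using block_eq_cluster block_unconstrained by blast

lemma block_subset: "i \<in> {1..K} \<Longrightarrow> block \<sigma> i \<subseteq> {1..K}"
  using hyp block_eq_cluster block_unconstrained unfolding is_hypothesis_def by (cases "i \<in> \<Union>\<sigma>") auto

lemma finite_block: "i \<in> {1..K} \<Longrightarrow> finite (block \<sigma> i)"
  using block_subset finite_subset by blast

lemma block_eq_if_mem: "j \<in> block \<sigma> i \<Longrightarrow> block \<sigma> j = block \<sigma> i"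
  using block_eq_cluster block_unconstrained by (cases "i \<in> \<Union>\<sigma>") auto

lemma cluster_is_block: "A \<in> \<sigma> \<Longrightarrow> \<exists>i\<in>{1..K}. A = block \<sigma> i"
  using hyp block_eq_cluster unfolding is_hypothesis_def
  by (metis all_not_in_conv card.empty not_numeral_le_zero subsetD)

lemma group_eq_block:
  "G \<in> groups K \<sigma> \<Longrightarrow> i \<in> G \<Longrightarrow> G = (if i \<in> \<Union>\<sigma> then block \<sigma> i else {1..K} - \<Union>\<sigma>)"
  using block_eq_cluster by (auto simp: groups_def)

lemma block_ne_if_groups_ne:
  assumes "G \<in> groups K \<sigma>" "H \<in> groups K \<sigma>" "G \<noteq> H" "i \<in> G" "j \<in> H"
  shows "block \<sigma> i \<noteq> block \<sigma> j"
proof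
  assume eq: "block \<sigma> i = block \<sigma> j"
  have "G = H"
  proof (cases "i \<in> \<Union>\<sigma>")
    case True
    then obtain A where A: "A \<in> \<sigma>" "i \<in> A" by blast
    then have j: "j \<in> A" using eq mem_block[of j] block_eq_cluster[OF A] by simp
    have "G = A" using group_eq_block[OF assms(1,4)] True block_eq_cluster[OF A] by simp
    moreover have "H = A"
      using group_eq_block[OF assms(2,5)] A(1) j block_eq_cluster[OF A(1) j] by auto
    ultimately show ?thesis by simp
  next
    case False
    then have "j = i" using mem_block[of j] unfolding eq[symmetric] block_unconstrained[OF False] by simp
    then show ?thesis using group_eq_block[OF assms(1,4)] group_eq_block[OF assms(2,5)] False by simp
  qed
  then show False using assms(3) by contradiction
qed

lemma Lambda_const_on_block:
  assumes "P \<in> Lambda K \<sigma>" "i \<in> {1..K}" "j \<in> block \<sigma> i"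
  shows "P j = P i"
proof (cases "i \<in> \<Union>\<sigma>")
  case True
  then obtain A where A: "A \<in> \<sigma>" "i \<in> A" by blast
  then have "j \<in> A" using assms(3) block_eq_cluster[OF A] by simp
  then show ?thesis using assms(1) A unfolding Lambda_def by blast
next
  case False
  then show ?thesis using assms(3) block_unconstrained[OF False] by simp
qed

lemma in_Lambda_if_separates_blocks:
  assumes "\<forall>i\<in>{1..K}. is_dist (P i)"
    and "\<forall>i\<in>{1..K}. \<forall>j\<in>{1..K}. P i = P j \<longleftrightarrow> block \<sigma> i = block \<sigma> j"
  shows "P \<in> Lambda K \<sigma>"
  unfolding Lambda_def
proof (intro CollectI conjI ballI impI)
  fix A i j assume "A \<in> \<sigma>" "i \<in> A" "j \<in> A"
  moreover from this have "i \<in> {1..K}" "j \<in> {1..K}" using hyp unfolding is_hypothesis_def by blast+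
  ultimately show "P i = P j" using assms(2) block_eq_cluster[of A] by simp
next
  fix G H i j assume "G \<in> groups K \<sigma>" "H \<in> groups K \<sigma>" "G \<noteq> H" "i \<in> G" "j \<in> H"
  moreover from this have "i \<in> {1..K}" "j \<in> {1..K}"
    using hyp unfolding groups_def is_hypothesis_def by blast+
  ultimately show "P i \<noteq> P j" using assms(2) block_ne_if_groups_ne by simp
next
  fix i assume "i \<in> {1..K}"
  then show "is_dist (P i)" using assms(1) by simp
qed


end

definition pooled_emp_dist :: "(nat \<Rightarrow> 'x list) \<Rightarrow> nat set \<Rightarrow> 'x \<Rightarrow> real" where
  "pooled_emp_dist xt A a = (\<Sum>j\<in>A. real (count_list (xt j) a)) / (\<Sum>j\<in>A. real (length (xt j)))"

definition sample_lik :: "(nat \<Rightarrow> 'x::finite list) \<Rightarrow> nat set \<Rightarrow> (nat \<Rightarrow> 'x \<Rightarrow> real) \<Rightarrow> real" where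
  "sample_lik xt I Q = (\<Prod>i\<in>I. \<Prod>a\<in>UNIV. Q i a ^ count_list (xt i) a)"

definition log_lik :: "(nat \<Rightarrow> 'x::finite list) \<Rightarrow> nat set \<Rightarrow> (nat \<Rightarrow> 'x \<Rightarrow> real) \<Rightarrow> real" where
  "log_lik xt I Q = (\<Sum>i\<in>I. \<Sum>a\<in>UNIV. real (count_list (xt i) a) * ln (Q i a))"

lemma sum_length_pos:
  assumes "finite A" "A \<noteq> {}" "\<forall>j\<in>A. xt j \<noteq> []"
  shows "0 < (\<Sum>j\<in>A. real (length (xt j)))"
  using assms by (intro sum_pos) auto

lemma pooled_emp_dist_pos:
  assumes "finite A" "i \<in> A" "0 < count_list (xt i) a"
  shows "0 < pooled_emp_dist xt A a"
proof -
  have "0 < length (xt i)" using assms(3) count_le_length[of "xt i" a] by linarith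
  then have "0 < (\<Sum>j\<in>A. real (length (xt j)))"
    using assms(1,2) by (intro sum_pos2[of _ i]) auto
  moreover have "0 < (\<Sum>j\<in>A. real (count_list (xt j) a))"
    using assms by (intro sum_pos2[of _ i]) auto
  ultimately show ?thesis unfolding pooled_emp_dist_def by simp
qed

lemma sum_count_list_pooled:
  "(\<Sum>a\<in>UNIV. \<Sum>j\<in>A. count_list (xt j) (a::'x::finite)) = (\<Sum>j\<in>A. length (xt j))"
  by (subst sum.swap) (simp add: sum_count_list_UNIV)

lemma is_dist_pooled_emp_dist:
  fixes xt :: "nat \<Rightarrow> 'x::finite list"
  assumes "finite A" "A \<noteq> {}" "\<forall>j\<in>A. xt j \<noteq> []"
  shows "is_dist (pooled_emp_dist xt A)"
proof -
  have "(\<Sum>a\<in>UNIV. \<Sum>j\<in>A. real (count_list (xt j) a)) = (\<Sum>j\<in>A. real (length (xt j)))"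
    using sum_count_list_pooled by (simp flip: of_nat_sum)
  then show ?thesis
    using sum_length_pos[OF assms]
    by (simp add: is_dist_def pooled_emp_dist_def sum_nonneg flip: sum_divide_distrib)
qed

lemma sample_lik_eq_exp_log_lik:
  assumes "finite I" "\<And>i a. i \<in> I \<Longrightarrow> 0 < count_list (xt i) a \<Longrightarrow> 0 < Q i a"
  shows "sample_lik xt I Q = exp (log_lik xt I Q)"
proof -
  have pos: "0 < Q i a ^ count_list (xt i) a" if "i \<in> I" for i a
    using assms(2)[OF that, of a] by (cases "count_list (xt i) a = 0") auto
  have "ln (\<Prod>a\<in>UNIV. Q i a ^ count_list (xt i) a) = (\<Sum>a\<in>UNIV. count_list (xt i) a * ln (Q i a))"
    if "i \<in> I" for i
    by (subst ln_prod) (use assms(2)[OF that] in \<open>auto simp: ln_realpow, fastforce\<close>)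
  then have "ln (sample_lik xt I Q) = log_lik xt I Q"
    unfolding sample_lik_def log_lik_def
    by (subst ln_prod) (use assms in \<open>auto, fastforce\<close>)
  moreover have "0 < sample_lik xt I Q"
    unfolding sample_lik_def using pos by (simp add: prod_pos)
  ultimately show ?thesis by (metis exp_ln)
qed

lemma sample_lik_le_pooled:
  fixes xt :: "nat \<Rightarrow> 'x::finite list"
  assumes "finite A" "A \<noteq> {}" "\<forall>j\<in>A. xt j \<noteq> []" "is_dist q"
  shows "sample_lik xt A (\<lambda>_. q) \<le> sample_lik xt A (\<lambda>_. pooled_emp_dist xt A)"
proof -
  define m where "m a = (\<Sum>j\<in>A. count_list (xt j) a)" for a
  have pool: "\<And>f. sample_lik xt A (\<lambda>_. f) = (\<Prod>a\<in>UNIV. f a ^ m a)"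
    unfolding sample_lik_def m_def using assms(1) by (simp add: power_sum prod.swap[of _ A])
  have "pooled_emp_dist xt A a = m a / real (\<Sum>a\<in>UNIV. m a)" for a
    unfolding pooled_emp_dist_def m_def sum_count_list_pooled by simp
  moreover have "0 < real (\<Sum>a\<in>UNIV. m a)"
    using sum_length_pos[OF assms(1-3)] unfolding m_def sum_count_list_pooled by simp
  ultimately show ?thesis
    unfolding pool using prod_power_le_prod_frequency_power[OF assms(4)] by simp
qed

lemma Gdiv_emp_dist:
  fixes xt :: "nat \<Rightarrow> 'x::finite list"
  assumes A: "finite A" "A \<noteq> {}" "\<forall>j\<in>A. xt j \<noteq> []"
    and t: "0 < t" and w: "\<forall>j\<in>A. w j = real (length (xt j)) / real t"
  shows "real t * Gdiv (\<lambda>i. emp_dist (xt i)) w A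
    = log_lik xt A (\<lambda>i. emp_dist (xt i)) - log_lik xt A (\<lambda>_. pooled_emp_dist xt A)"
proof -
  define P where "P i = emp_dist (xt i)" for i
  have "(\<Sum>i\<in>A. w i * P i a) / (\<Sum>i\<in>A. w i) = pooled_emp_dist xt A a" for a
    using A w t by (simp add: P_def emp_dist_eq_count_list pooled_emp_dist_def
        flip: sum_divide_distrib)
  moreover have "\<not> (\<forall>i\<in>A. w i = 0)" using A w t by auto
  ultimately have "real t * Gdiv P w A = (\<Sum>i\<in>A. real t * w i * KL (P i) (pooled_emp_dist xt A))"
    unfolding Gdiv_def by (simp add: sum_distrib_left mult.assoc)
  also have "\<dots> = (\<Sum>i\<in>A. \<Sum>a\<in>UNIV. real (count_list (xt i) a)
                             * (ln (P i a) - ln (pooled_emp_dist xt A a)))"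
  proof (intro sum.cong refl)
    fix i a assume i: "i \<in> A"
    have "real t * w i * (if P i a = 0 then 0 else P i a * ln (P i a / pooled_emp_dist xt A a))
        = real (count_list (xt i) a) * (ln (P i a) - ln (pooled_emp_dist xt A a))" for a
    proof (cases "count_list (xt i) a = 0")
      case False
      then have "P i a \<noteq> 0" "pooled_emp_dist xt A a \<noteq> 0"
        using pooled_emp_dist_pos[OF A(1) i, of xt a] A(3) i by (auto simp: P_def emp_dist_eq_count_list)
      moreover have "real t * w i * P i a = real (count_list (xt i) a)"
        using w i t A(3) by (simp add: P_def emp_dist_eq_count_list)
      ultimately show ?thesis by (simp add: ln_div)
    qed (simp add: P_def emp_dist_eq_count_list)
    then show "real t * w i * KL (P i) (pooled_emp_dist xt A)
        = (\<Sum>a\<in>UNIV. real (count_list (xt i) a) * (ln (P i a) - ln (pooled_emp_dist xt A a)))"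
      unfolding KL_def sum_distrib_left by simp
  qed
  finally show ?thesis
    unfolding P_def log_lik_def by (simp add: right_diff_distrib sum_subtractf)
qed

definition ml_estimate :: "nat set set \<Rightarrow> (nat \<Rightarrow> 'x list) \<Rightarrow> nat \<Rightarrow> 'x \<Rightarrow> real" where
  "ml_estimate \<sigma> xt i = pooled_emp_dist xt (block \<sigma> i)"

locale sampled_hypothesis = clustering_hypothesis +
  fixes xt :: "nat \<Rightarrow> 'x::finite list"
  assumes samples_nonempty: "\<forall>i\<in>{1..K}. xt i \<noteq> []"
begin

lemma block_samples_nonempty: "i \<in> {1..K} \<Longrightarrow> \<forall>j\<in>block \<sigma> i. xt j \<noteq> []"
  using block_subset samples_nonempty by blast

lemma is_dist_ml_estimate: "i \<in> {1..K} \<Longrightarrow> is_dist (ml_estimate \<sigma> xt i)"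
  unfolding ml_estimate_def
  by (rule is_dist_pooled_emp_dist[OF finite_block]) (use mem_block block_samples_nonempty in auto)

lemma ml_estimate_pos:
  "i \<in> {1..K} \<Longrightarrow> 0 < count_list (xt i) a \<Longrightarrow> 0 < ml_estimate \<sigma> xt i a"
  unfolding ml_estimate_def by (rule pooled_emp_dist_pos[OF finite_block mem_block])

lemma sample_lik_blocks:
  "sample_lik xt {1..K} Q = (\<Prod>B\<in>block \<sigma> ` {1..K}. sample_lik xt B Q)"
  unfolding sample_lik_def
  by (rule prod.partition_blocks) (use mem_block block_subset block_eq_if_mem in blast)+

lemma log_lik_blocks:
  "log_lik xt {1..K} Q = (\<Sum>B\<in>block \<sigma> ` {1..K}. log_lik xt B Q)"
  unfolding log_lik_def
  by (rule sum.partition_blocks) (use mem_block block_subset block_eq_if_mem in blast)+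

lemma sample_lik_le_ml_estimate:
  assumes "Q \<in> Lambda K \<sigma>"
  shows "sample_lik xt {1..K} Q \<le> sample_lik xt {1..K} (ml_estimate \<sigma> xt)"
proof -
  have "sample_lik xt (block \<sigma> i) Q \<le> sample_lik xt (block \<sigma> i) (ml_estimate \<sigma> xt)"
    if i: "i \<in> {1..K}" for i
  proof -
    have "is_dist (Q i)" using assms i by (rule is_dist_Lambda)
    then have "sample_lik xt (block \<sigma> i) (\<lambda>_. Q i)
        \<le> sample_lik xt (block \<sigma> i) (\<lambda>_. pooled_emp_dist xt (block \<sigma> i))"
      using finite_block[OF i] mem_block block_samples_nonempty[OF i]
      by (intro sample_lik_le_pooled) auto
    moreover have "sample_lik xt (block \<sigma> i) Q = sample_lik xt (block \<sigma> i) (\<lambda>_. Q i)"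
      unfolding sample_lik_def by (auto intro!: prod.cong dest: Lambda_const_on_block[OF assms i])
    moreover have "sample_lik xt (block \<sigma> i) (ml_estimate \<sigma> xt)
        = sample_lik xt (block \<sigma> i) (\<lambda>_. pooled_emp_dist xt (block \<sigma> i))"
      unfolding sample_lik_def ml_estimate_def by (auto intro!: prod.cong dest: block_eq_if_mem)
    ultimately show ?thesis by simp
  qed
  moreover have "0 \<le> sample_lik xt B Q" if "B \<subseteq> {1..K}" for B
  proof -
    have "0 \<le> Q i a" if "i \<in> B" for i a
      using is_dist_Lambda[OF assms] \<open>B \<subseteq> {1..K}\<close> that unfolding is_dist_def by blast
    then show ?thesis unfolding sample_lik_def by (auto intro!: prod_nonneg)
  qed
  ultimately show ?thesis
    unfolding sample_lik_blocks[of Q] sample_lik_blocks[of "ml_estimate \<sigma> xt"]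
    using block_subset by (intro prod_mono) auto
qed

lemma log_lik_ml_estimate:
  assumes t: "0 < t" and w: "\<forall>i\<in>{1..K}. w i = real (length (xt i)) / real t"
  shows "log_lik xt {1..K} (ml_estimate \<sigma> xt)
    = log_lik xt {1..K} (\<lambda>i. emp_dist (xt i)) - real t * g_hyp (\<lambda>i. emp_dist (xt i)) w \<sigma>"
proof -
  let ?P = "\<lambda>i. emp_dist (xt i)"
  have blockwise: "log_lik xt B (ml_estimate \<sigma> xt) = log_lik xt B ?P - real t * Gdiv ?P w B"
    if B: "B \<in> block \<sigma> ` {1..K}" for B
  proof -
    obtain i where i: "i \<in> {1..K}" and B: "B = block \<sigma> i" using B by blast
    have "real t * Gdiv ?P w B = log_lik xt B ?P - log_lik xt B (\<lambda>_. pooled_emp_dist xt B)"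
      using finite_block[OF i] mem_block[of i] block_samples_nonempty[OF i] block_subset[OF i] w t
      unfolding B by (intro Gdiv_emp_dist) auto
    moreover have "log_lik xt B (ml_estimate \<sigma> xt) = log_lik xt B (\<lambda>_. pooled_emp_dist xt B)"
      unfolding log_lik_def B ml_estimate_def by (auto intro!: sum.cong dest: block_eq_if_mem)
    ultimately show ?thesis by simp
  qed
  have "log_lik xt {1..K} (ml_estimate \<sigma> xt)
      = (\<Sum>B\<in>block \<sigma> ` {1..K}. log_lik xt B ?P - real t * Gdiv ?P w B)"
    unfolding log_lik_blocks[of "ml_estimate \<sigma> xt"] by (rule sum.cong[OF refl blockwise])
  also have "\<dots> = log_lik xt {1..K} ?P - real t * (\<Sum>B\<in>block \<sigma> ` {1..K}. Gdiv ?P w B)"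
    unfolding log_lik_blocks[of ?P] by (simp add: sum_subtractf sum_distrib_left)
  also have "(\<Sum>B\<in>block \<sigma> ` {1..K}. Gdiv ?P w B) = g_hyp ?P w \<sigma>"
    unfolding g_hyp_def
  proof (rule sum.mono_neutral_right)
    show "\<sigma> \<subseteq> block \<sigma> ` {1..K}" using cluster_is_block by blast
    show "\<forall>B\<in>block \<sigma> ` {1..K} - \<sigma>. Gdiv ?P w B = 0"
    proof
      fix B assume "B \<in> block \<sigma> ` {1..K} - \<sigma>"
      then obtain i where "B = block \<sigma> i" "i \<notin> \<Union>\<sigma>" using block_eq_cluster by blast
      then show "Gdiv ?P w B = 0" using block_unconstrained Gdiv_singleton by simp
    qed
  qed simp
  finally show ?thesis .
qed


text \<open>The maximum-likelihood estimate may violate the separation constraints of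
  \<open>Lambda K \<sigma>\<close>; it is approached from inside by mixing in a little of a distribution whose
  value at a fixed letter differs between blocks.\<close>

lemma ml_estimate_le_SUP:
  assumes "2 \<le> CARD('x)"
  shows "ereal (sample_lik xt {1..K} (ml_estimate \<sigma> xt))
    \<le> (SUP Q\<in>Lambda K \<sigma>. ereal (sample_lik xt {1..K} Q))"
proof -
  obtain a0 a1 :: 'x where a01: "a0 \<noteq> a1" using exists_two_elements[OF assms] .
  define s where "s i = real (Min (block \<sigma> i)) / real (K + 1)" for i
  define R where "R i a = (if a = a0 then s i else 0) + (if a = a1 then 1 - s i else 0)" for i a
  define Qe where "Qe \<epsilon> i a = (1 - \<epsilon>) * ml_estimate \<sigma> xt i a + \<epsilon> * R i a" for \<epsilon> i a
  have Min_block: "Min (block \<sigma> i) \<in> block \<sigma> i" if "i \<in> {1..K}" for i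
    using finite_block[OF that] mem_block by (intro Min_in) auto
  have is_dist_R: "is_dist (R i)" if i: "i \<in> {1..K}" for i
  proof -
    have "0 \<le> s i" "s i \<le> 1"
      using Min_block[OF i] block_subset[OF i] unfolding s_def by auto
    then show ?thesis using a01 unfolding is_dist_def R_def by (simp add: sum.distrib)
  qed
  have s_ne: "s i \<noteq> s j" if ij: "i \<in> {1..K}" "j \<in> {1..K}" and ne: "block \<sigma> i \<noteq> block \<sigma> j"
    for i j
  proof
    assume "s i = s j"
    then have "Min (block \<sigma> i) = Min (block \<sigma> j)" unfolding s_def by simp
    then show False
      using block_eq_if_mem[OF Min_block[OF ij(1)]] block_eq_if_mem[OF Min_block[OF ij(2)]] ne
      by simp
  qed
  have separating: "\<forall>\<^sub>F \<epsilon> in at_right 0. \<forall>i\<in>{1..K}. \<forall>j\<in>{1..K}.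
      block \<sigma> i \<noteq> block \<sigma> j \<longrightarrow> Qe \<epsilon> i a0 \<noteq> Qe \<epsilon> j a0"
  proof (intro eventually_ball_finite ballI finite_atLeastAtMost)
    fix i j assume ij: "i \<in> {1..K}" "j \<in> {1..K}"
    have diff: "Qe \<epsilon> i a0 - Qe \<epsilon> j a0
        = (1 - \<epsilon>) * (ml_estimate \<sigma> xt i a0 - ml_estimate \<sigma> xt j a0) + \<epsilon> * (s i - s j)" for \<epsilon>
      unfolding Qe_def R_def using a01 by (simp add: algebra_simps)
    show "\<forall>\<^sub>F \<epsilon> in at_right 0. block \<sigma> i \<noteq> block \<sigma> j \<longrightarrow> Qe \<epsilon> i a0 \<noteq> Qe \<epsilon> j a0"
    proof (cases "block \<sigma> i = block \<sigma> j")
      case False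
      then have "\<forall>\<^sub>F \<epsilon> in at_right 0. Qe \<epsilon> i a0 - Qe \<epsilon> j a0 \<noteq> 0"
        unfolding diff using s_ne[OF ij] by (intro eventually_mix_ne_0) simp
      then show ?thesis by (rule eventually_mono) simp
    qed simp
  qed
  have "\<forall>\<^sub>F \<epsilon> in at_right 0. \<epsilon> \<in> {0<..<1::real}"
    by (rule eventually_at_right_real) simp
  with separating have "\<forall>\<^sub>F \<epsilon> in at_right 0. Qe \<epsilon> \<in> Lambda K \<sigma>"
  proof eventually_elim
    case (elim \<epsilon>)
    show ?case
    proof (rule in_Lambda_if_separates_blocks)
      show "\<forall>i\<in>{1..K}. is_dist (Qe \<epsilon> i)"
        unfolding Qe_def using elim is_dist_ml_estimate is_dist_R by (auto intro: is_dist_mix)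
      show "\<forall>i\<in>{1..K}. \<forall>j\<in>{1..K}. Qe \<epsilon> i = Qe \<epsilon> j \<longleftrightarrow> block \<sigma> i = block \<sigma> j"
      proof (intro ballI iffI)
        fix i j assume "i \<in> {1..K}" "j \<in> {1..K}" "Qe \<epsilon> i = Qe \<epsilon> j"
        then show "block \<sigma> i = block \<sigma> j" using elim(1) by metis
      next
        fix i j assume "block \<sigma> i = block \<sigma> j"
        then show "Qe \<epsilon> i = Qe \<epsilon> j" unfolding Qe_def R_def s_def ml_estimate_def by (simp only:)
      qed
    qed
  qed
  moreover have "((\<lambda>\<epsilon>. sample_lik xt {1..K} (Qe \<epsilon>))
      \<longlongrightarrow> sample_lik xt {1..K} (ml_estimate \<sigma> xt)) (at_right 0)"
    unfolding sample_lik_def Qe_def by (auto intro!: tendsto_eq_intros)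
  ultimately show ?thesis
    by (intro tendsto_upperbound[OF tendsto_ereal]) (auto elim!: eventually_mono intro: SUP_upper)
qed

lemma likelihood_eq_exp:
  assumes "2 \<le> CARD('x)" and t: "0 < t" and w: "\<forall>i\<in>{1..K}. w i = real (length (xt i)) / real t"
  shows "likelihood K xt \<sigma> = ereal (exp (log_lik xt {1..K} (\<lambda>i. emp_dist (xt i))
                                         - real t * g_hyp (\<lambda>i. emp_dist (xt i)) w \<sigma>))"
proof -
  have "likelihood K xt \<sigma> = (SUP Q\<in>Lambda K \<sigma>. ereal (sample_lik xt {1..K} Q))"
    unfolding likelihood_def sample_lik_def by (simp add: prod_nth_eq_prod_count_list)
  also have "\<dots> = ereal (sample_lik xt {1..K} (ml_estimate \<sigma> xt))"
    by (intro antisym SUP_least ml_estimate_le_SUP[OF assms(1)])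
      (simp only: ereal_less_eq(3) sample_lik_le_ml_estimate)
  also have "sample_lik xt {1..K} (ml_estimate \<sigma> xt)
      = exp (log_lik xt {1..K} (ml_estimate \<sigma> xt))"
    by (rule sample_lik_eq_exp_log_lik) (simp_all add: ml_estimate_pos)
  finally show ?thesis unfolding log_lik_ml_estimate[OF t w] .
qed

end

lemma Max_Min_gap_at_argmin:
  fixes g :: "'a \<Rightarrow> real" and c :: real
  assumes C: "finite C" "2 \<le> card C" and c: "0 \<le> c"
    and s: "s \<in> C" "\<forall>\<sigma>\<in>C. g s \<le> g \<sigma>"
  defines "F \<equiv> \<lambda>\<sigma>. Min ((\<lambda>\<sigma>'. c * g \<sigma>' - c * g \<sigma>) ` (C - {\<sigma>}))"
  shows "F s = c * Min (g ` (C - {s})) - c * g s" and "Max (F ` C) = F s"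
proof -
  have others: "C - {\<sigma>} \<noteq> {}" for \<sigma>
  proof
    assume "C - {\<sigma>} = {}"
    then have "card C \<le> card {\<sigma>}" by (intro card_mono) auto
    then show False using C(2) by simp
  qed
  have F_eq: "F \<sigma> = c * Min (g ` (C - {\<sigma>})) - c * g \<sigma>" for \<sigma>
  proof -
    have "F \<sigma> = Min ((\<lambda>y. c * y - c * g \<sigma>) ` g ` (C - {\<sigma>}))"
      unfolding F_def image_image ..
    also have "\<dots> = c * Min (g ` (C - {\<sigma>})) - c * g \<sigma>"
      using C(1) others c by (intro mono_Min_commute[symmetric]) (auto simp: mono_def mult_left_mono)
    finally show ?thesis .
  qed
  then show "F s = c * Min (g ` (C - {s})) - c * g s" .
  have "F \<sigma> \<le> F s" if "\<sigma> \<in> C" for \<sigma>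
  proof -
    have "c * Min (g ` (C - {\<sigma>})) \<le> c * g \<sigma>" if "\<sigma> \<noteq> s"
      using C(1) s \<open>\<sigma> \<in> C\<close> that by (intro mult_left_mono[OF _ c] Min_le_iff[THEN iffD2]) auto
    moreover have "c * g s \<le> c * Min (g ` (C - {s}))"
      using C(1) s others by (intro mult_left_mono[OF _ c]) (simp add: Min_ge_iff)
    ultimately show ?thesis
      unfolding F_eq by (cases "\<sigma> = s") auto
  qed
  then show "Max (F ` C) = F s"
    using C(1) s by (intro Max_eqI) auto
qed

theorem mainTheorem10:
  fixes K t :: nat and C :: "nat set set set" and N :: "nat \<Rightarrow> nat"
    and xt :: "nat \<Rightarrow> 'x::finite list" and \<sigma>hat :: "nat set set"
    and Phat :: "nat \<Rightarrow> 'x \<Rightarrow> real" and w :: "nat \<Rightarrow> real"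
    and L :: "nat set set \<Rightarrow> ereal" and Z :: "nat set set \<Rightarrow> nat set set \<Rightarrow> real"
    and F :: "nat set set \<Rightarrow> real"
  assumes "CARD('x) \<ge> 2" and "K \<ge> 2"
    and "clustering_problem K C"
    and "\<forall>i\<in>{1..K}. N i \<ge> 1" and "(\<Sum>i=1..K. N i) = t"
    and "\<forall>i\<in>{1..K}. length (xt i) = N i"
    and Phat_def: "Phat = (\<lambda>i. emp_dist (xt i))"
    and w_def: "w = (\<lambda>i. real (N i) / real t)"
    and L_def: "L = (\<lambda>\<sigma>. likelihood K xt \<sigma>)"
    and Z_def: "Z = (\<lambda>\<sigma>1 \<sigma>2. ln (real_of_ereal (L \<sigma>1) / real_of_ereal (L \<sigma>2)))"
    and F_def: "F = (\<lambda>\<sigma>. Min ((\<lambda>\<sigma>'. Z \<sigma> \<sigma>') ` (C - {\<sigma>})))"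
    and "\<sigma>hat \<in> C" and "\<forall>\<sigma>\<in>C. g_hyp Phat w \<sigma>hat \<le> g_hyp Phat w \<sigma>"
  shows "(\<forall>\<sigma>\<in>C. 0 < L \<sigma> \<and> L \<sigma> < \<infinity>)
    \<and> Max (F ` C) = real t * G_hyp C Phat w \<sigma>hat - real t * g_hyp Phat w \<sigma>hat
    \<and> F \<sigma>hat = Max (F ` C)"
proof -
  note card = assms(1) and N = assms(4-6) and argmin = assms(12,13)
  have C: "finite C" "2 \<le> card C" and hyp: "\<And>\<sigma>. \<sigma> \<in> C \<Longrightarrow> is_hypothesis K \<sigma>"
    using assms(3) unfolding clustering_problem_def by auto
  have nonempty: "\<forall>i\<in>{1..K}. xt i \<noteq> []" using N by fastforce
  have "N 1 \<le> (\<Sum>i=1..K. N i)" using assms(2) by (intro member_le_sum) auto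
  then have t: "0 < t" using N(1,2) assms(2) by force
  have w: "\<forall>i\<in>{1..K}. w i = real (length (xt i)) / real t" using N by (simp add: w_def)
  define g where "g \<sigma> = g_hyp Phat w \<sigma>" for \<sigma>
  have L: "L \<sigma> = ereal (exp (log_lik xt {1..K} Phat - real t * g \<sigma>))" if "\<sigma> \<in> C" for \<sigma>
  proof -
    interpret sampled_hypothesis K \<sigma> xt using hyp[OF that] nonempty by unfold_locales
    show ?thesis unfolding L_def g_def Phat_def by (rule likelihood_eq_exp[OF card t w])
  qed
  have "Z \<sigma> \<sigma>' = real t * g \<sigma>' - real t * g \<sigma>" if "\<sigma> \<in> C" "\<sigma>' \<in> C" for \<sigma> \<sigma>'
    using that by (simp add: Z_def L exp_diff[symmetric])
  then have F: "F \<sigma> = Min ((\<lambda>\<sigma>'. real t * g \<sigma>' - real t * g \<sigma>) ` (C - {\<sigma>}))"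
    if "\<sigma> \<in> C" for \<sigma>
    unfolding F_def using that by (intro arg_cong[where f = Min] image_cong) auto
  have "F \<sigma>hat = real t * G_hyp C Phat w \<sigma>hat - real t * g_hyp Phat w \<sigma>hat"
    and "Max (F ` C) = F \<sigma>hat"
    using Max_Min_gap_at_argmin[OF C, of "real t" \<sigma>hat g] argmin F image_cong[OF refl F]
    by (simp_all add: G_hyp_def g_def)
  then show ?thesis using L by simp
qed

end
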